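(* For every integer $n$ with $|n|\ge 400$, \[ C_n<265.55\,\log|n|\,(\log\log|n|)^2+9.01\,\log\log|n|. \] That is, if $S$ is any set of positive integers with the property $D(n)$, then the number of elements $x\in S$ with $1\le x\le n^2$ is less than the right-hand side.
   Context: Let $n$ be a nonzero integer. A set of positive integers $S$ has the property $D(n)$ if $xy+n$ is a perfect square for all distinct $x,y\in S$. Define $C_n=\sup\{|S\cap[1,n^2]| : S \text{ has the property } D(n)\}$. Here $\log$ is the natural logarithm. *)

theory Defs
  imports Complex_Main
begin

definition has_property_D :: "int \<Rightarrow> int set \<Rightarrow> bool" where
  "has_property_D n S \<longleftrightarrow> (\<forall>x\<in>S. x > 0) \<and>
     (\<forall>x\<in>S. \<forall>y\<in>S. x \<noteq> y \<longrightarrow> (\<exists>k::int. x * y + n = k\<^sup>2))"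

text \<open>C_n = sup of |S \<inter> [1, n^2]| over sets S with property D(n).
  These cardinalities are bounded by n^2, so the supremum over nat is well behaved.\<close>
definition C :: "int \<Rightarrow> nat" where
  "C n = Sup {card (S \<inter> {1..n\<^sup>2}) | S. has_property_D n S}"

end

theory Submission
  imports Defs "HOL-Number_Theory.Number_Theory" "HOL-Analysis.Convex"
begin

(* For an odd prime p not dividing n, the residues mod p of a D(n)-set form a set A in which
   ab + n is a square mod p for all distinct a, b. The row sums X(a) = sum_{b in A} (ab + n | p)
   are then at least |A| - 3 for a in A, while the correlations sum_a (ab + n | p) (ab' + n | p),
   b and b' distinct mod p, have absolute value at most 1, so the sum of X(a)^2 over all
   residues a is at most |A| (p + |A|). Hence |A| <= sqrt p + 5.
   A variant of Gallagher's larger sieve combines these local bounds: two distinct elements of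
   [1, n^2] are congruent modulo few primes above sqrt Q, and by Nair's bound
   lcm(1, ..., 2m + 1) >= 4^m there are many primes in (sqrt Q, Q]. With sqrt Q close to
   40 log|n|, a D(n)-set has at most 80 log|n| + 12 elements in [1, n^2]. *)

section \<open>Sums of Legendre symbols\<close>

lemma Legendre_mod [simp]: "Legendre (a mod p) p = Legendre a p"
  unfolding Legendre_def QuadRes_def cong_def by simp

lemma Legendre_cong: "[a = b] (mod p) \<Longrightarrow> Legendre a p = Legendre b p"
  by (metis cong_def Legendre_mod)

lemma Legendre_cases: "Legendre a p \<in> {-1, 0, 1}"
  unfolding Legendre_def by auto

lemma Legendre_eq_0_iff: "Legendre a p = 0 \<longleftrightarrow> p dvd a"
  unfolding Legendre_def by (auto simp: cong_0_iff)

lemma Legendre_QuadRes_nonneg: "QuadRes p a \<Longrightarrow> Legendre a p \<ge> 0"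
  unfolding Legendre_def by auto

lemma Legendre_QuadRes_eq_1: "QuadRes p a \<Longrightarrow> \<not> p dvd a \<Longrightarrow> Legendre a p = 1"
  unfolding Legendre_def by (auto simp: cong_0_iff)

lemma sum_mod_affine_reindex:
  fixes p a c :: int
  assumes "p > 0" "coprime a p" "\<And>x. f (x mod p) = f x"
  shows "(\<Sum>x\<in>{0..<p}. f (a * x + c)) = (\<Sum>x\<in>{0..<p}. f x)"
proof -
  let ?g = "\<lambda>x. (a * x + c) mod p"
  have "inj_on ?g {0..<p}"
  proof (rule inj_onI)
    fix x y assume "x \<in> {0..<p}" "y \<in> {0..<p}" "?g x = ?g y"
    then have "[a * x = a * y] (mod p)" and range: "x \<in> {0..<p}" "y \<in> {0..<p}"
      by (auto simp: cong_add_rcancel simp flip: cong_def)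
    then have "[x = y] (mod p)"
      using assms(2) cong_mult_lcancel by blast
    with range show "x = y" by (simp add: cong_def)
  qed
  moreover have "?g ` {0..<p} \<subseteq> {0..<p}" using assms(1) by auto
  ultimately have "bij_betw ?g {0..<p} {0..<p}"
    by (simp add: bij_betw_def endo_inj_surj)
  then have "(\<Sum>x\<in>{0..<p}. f (?g x)) = (\<Sum>x\<in>{0..<p}. f x)"
    by (rule sum.reindex_bij_betw)
  then show ?thesis by (simp add: assms(3))
qed

lemma bij_betw_modular_inverse:
  fixes p :: int
  assumes "prime p"
  shows "bij_betw (modular_inverse p) {1..<p} {1..<p}"
proof -
  have coprime: "coprime z p" if "z \<in> {1..<p}" for z
    using that assms by (simp add: coprime_commute prime_imp_coprime zdvd_not_zless)
  have "p > 1" using assms prime_gt_1_int by blast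
  then have range: "modular_inverse p \<in> {1..<p} \<rightarrow> {1..<p}"
    using coprime mult_modular_inverse_int_pos[of p] modular_inverse_int_less[of p]
    by (force simp: int_one_le_iff_zero_less)
  have involution: "modular_inverse p (modular_inverse p z) = z" if "z \<in> {1..<p}" for z
    using that coprime[OF that] by (intro modular_inverse_int_eqI cong_modular_inverse2) auto
  from range range involution involution show ?thesis by (rule bij_betwI)
qed

context
  fixes p :: int
  assumes prime_p: "prime p" and p_gt_2: "p > 2"
begin

lemma Legendre_mult: "Legendre (a * b) p = Legendre a p * Legendre b p"
proof -
  have "2 < nat p" "prime (nat p)" using prime_p p_gt_2 by auto
  from euler_criterion[OF this(2,1)] p_gt_2
  have euler: "[Legendre x p = x ^ ((nat p - 1) div 2)] (mod p)" for x
    by simp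
  have "[Legendre (a * b) p = (a * b) ^ ((nat p - 1) div 2)] (mod p)"
    by (rule euler)
  also have "(a * b) ^ ((nat p - 1) div 2) = a ^ ((nat p - 1) div 2) * b ^ ((nat p - 1) div 2)"
    by (rule power_mult_distrib)
  also have "[\<dots> = Legendre a p * Legendre b p] (mod p)"
    by (intro cong_mult cong_sym[OF euler])
  finally have "p dvd Legendre (a * b) p - Legendre a p * Legendre b p"
    by (simp add: cong_iff_dvd_diff)
  moreover have "\<bar>Legendre (a * b) p - Legendre a p * Legendre b p\<bar> < p"
    using Legendre_cases[of "a * b" p] Legendre_cases[of a p] Legendre_cases[of b p] p_gt_2 by auto
  ultimately show ?thesis
    using dvd_imp_le_int[of "Legendre (a * b) p - Legendre a p * Legendre b p" p] p_gt_2
    by (cases "Legendre (a * b) p = Legendre a p * Legendre b p") auto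
qed

lemma coprime_if_not_dvd: "\<not> p dvd a \<Longrightarrow> coprime a p"
  by (metis coprime_commute prime_imp_coprime prime_p)

lemma Legendre_mult_square: "\<not> p dvd y \<Longrightarrow> Legendre (y * y * a) p = Legendre a p"
  using Legendre_cases[of y p] Legendre_eq_0_iff[of y p] by (auto simp: Legendre_mult)

lemma exists_nonresidue: "\<exists>e. Legendre e p = -1"
proof (rule ccontr)
  assume no_nonresidue: "\<nexists>e. Legendre e p = -1"
  define h where "h = (p - 1) div 2"
  have "odd p" using prime_p p_gt_2 prime_odd_int by blast
  then have p_eq: "p = 2 * h + 1" unfolding h_def by presburger
  let ?sq = "\<lambda>y. (y * y) mod p"
  have "{1..<p} \<subseteq> ?sq ` {1..h}"
  proof
    fix e assume e: "e \<in> {1..<p}"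
    have "QuadRes p e"
      using no_nonresidue e unfolding Legendre_def QuadRes_def
      by (auto simp: cong_0_iff zdvd_not_zless split: if_splits)
    then obtain y where "[y^2 = e] (mod p)" unfolding QuadRes_def by blast
    define z where "z = y mod p"
    have z_range: "z \<in> {0..<p}" using p_gt_2 by (simp add: z_def)
    have sq_z: "?sq z = e"
      using \<open>[y^2 = e] (mod p)\<close> e by (simp add: z_def cong_def mod_simps power2_eq_square)
    have sq_neg: "?sq (p - z) = ?sq z"
    proof -
      have "(p - z) * (p - z) = z * z + p * (p - 2 * z)" by (simp add: algebra_simps)
      then show ?thesis by simp
    qed
    have "z \<noteq> 0" using sq_z e by auto
    show "e \<in> ?sq ` {1..h}"
    proof (cases "z \<le> h")
      case True
      with \<open>z \<noteq> 0\<close> z_range have "z \<in> {1..h}" by simp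
      with sq_z show ?thesis by (intro image_eqI[of _ _ z]) auto
    next
      case False
      with z_range p_eq have "p - z \<in> {1..h}" by simp
      with sq_z sq_neg show ?thesis by (intro image_eqI[of _ _ "p - z"]) auto
    qed
  qed
  then have "card {1..<p} \<le> card (?sq ` {1..h})" by (intro card_mono) auto
  also have "\<dots> \<le> card {1..h}" by (rule card_image_le) simp
  finally show False using p_eq p_gt_2 by simp
qed

lemma Legendre_affine_sum_eq_0:
  assumes "\<not> p dvd a"
  shows "(\<Sum>x\<in>{0..<p}. Legendre (a * x + c) p) = 0"
proof -
  have p_pos: "p > 0" using p_gt_2 by simp
  have reindex: "(\<Sum>x\<in>{0..<p}. Legendre (u * x + v) p) = (\<Sum>x\<in>{0..<p}. Legendre x p)"
    if "\<not> p dvd u" for u v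
    by (rule sum_mod_affine_reindex[OF p_pos coprime_if_not_dvd[OF that]]) simp
  obtain e where e: "Legendre e p = -1" using exists_nonresidue by blast
  then have "\<not> p dvd e" using Legendre_eq_0_iff[of e p] by auto
  from reindex[OF this, of 0]
  have "(\<Sum>x\<in>{0..<p}. Legendre x p) = - (\<Sum>x\<in>{0..<p}. Legendre x p)"
    by (simp add: Legendre_mult e sum_negf)
  then show ?thesis using reindex[OF assms] by simp
qed

lemma Legendre_sum_mult_affine:
  assumes "\<not> p dvd m"
  shows "(\<Sum>x\<in>{0..<p}. Legendre (x * (b * x + m)) p) = - Legendre b p"
proof -
  have split: "{0..<p} = insert 0 {1..<p}" using p_gt_2 by auto
  have "(\<Sum>x\<in>{0..<p}. Legendre (x * (b * x + m)) p)
      = (\<Sum>x\<in>{1..<p}. Legendre (x * (b * x + m)) p)"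
    unfolding split by (simp add: Legendre_def)
  also have "\<dots> = (\<Sum>x\<in>{1..<p}. Legendre (b + m * modular_inverse p x) p)"
  proof (rule sum.cong[OF refl])
    fix x assume x: "x \<in> {1..<p}"
    then have "\<not> p dvd x" by (auto simp: zdvd_not_zless)
    define i where "i = modular_inverse p x"
    have "[x * i = 1] (mod p)"
      unfolding i_def by (rule cong_modular_inverse1[OF coprime_if_not_dvd]) fact
    then have "[x * (b * x + m * (x * i)) = x * (b * x + m * 1)] (mod p)"
      by (intro cong_add cong_mult cong_refl)
    then have "Legendre (x * (b * x + m)) p = Legendre (x * x * (b + m * i)) p"
      by (intro Legendre_cong) (simp add: cong_sym_eq algebra_simps)
    also have "\<dots> = Legendre (b + m * i) p"
      by (rule Legendre_mult_square) fact
    finally show "Legendre (x * (b * x + m)) p = Legendre (b + m * modular_inverse p x) p"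
      by (simp add: i_def)
  qed
  also have "\<dots> = (\<Sum>t\<in>{1..<p}. Legendre (b + m * t) p)"
    using sum.reindex_bij_betw[OF bij_betw_modular_inverse[OF prime_p],
        of "\<lambda>t. Legendre (b + m * t) p"] .
  also have "\<dots> = (\<Sum>t\<in>{0..<p}. Legendre (m * t + b) p) - Legendre b p"
    unfolding split by (simp add: add.commute)
  also have "\<dots> = - Legendre b p"
    using Legendre_affine_sum_eq_0[OF assms] by simp
  finally show ?thesis .
qed

lemma Legendre_correlation_eq:
  assumes "\<not> p dvd b" "\<not> p dvd b - b'" "\<not> p dvd n"
  shows "(\<Sum>a\<in>{0..<p}. Legendre (a * b + n) p * Legendre (a * b' + n) p)
    = - (Legendre (modular_inverse p b) p * Legendre b' p)"
proof -
  define i where "i = modular_inverse p b"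
  have "[b * i = 1] (mod p)"
    unfolding i_def by (rule cong_modular_inverse1[OF coprime_if_not_dvd[OF assms(1)]])
  have "coprime i p"
    unfolding i_def by (rule coprime_modular_inverse[OF coprime_if_not_dvd[OF assms(1)]])
  define m where "m = n * (b - b')"
  have "\<not> p dvd m"
    using prime_p assms(2,3) by (simp add: m_def prime_dvd_mult_iff)
  let ?F = "\<lambda>a. Legendre (a * b + n) p * Legendre (a * b' + n) p"
  \<comment> \<open>substitute \<open>a = (z - n) / b\<close>\<close>
  have "Legendre (a mod p * c + n) p = Legendre (a * c + n) p" for a c
    by (rule Legendre_cong) (metis cong_def mod_add_left_eq mod_mult_left_eq)
  then have "(\<Sum>a\<in>{0..<p}. ?F a) = (\<Sum>z\<in>{0..<p}. ?F (i * z + - (i * n)))"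
    using p_gt_2 by (intro sum_mod_affine_reindex[symmetric] \<open>coprime i p\<close>) auto
  also have "\<dots> = (\<Sum>z\<in>{0..<p}. Legendre i p * Legendre (z * (b' * z + m)) p)"
  proof (rule sum.cong[OF refl])
    fix z
    have "[(b * i) * (z - n) + n = 1 * (z - n) + n] (mod p)"
      by (intro cong_add cong_mult cong_refl) fact
    then have left: "Legendre ((i * z + - (i * n)) * b + n) p = Legendre z p"
      by (intro Legendre_cong) (simp add: algebra_simps)
    have "[i * (b' * z + m) + n * (1 - b * i) = i * (b' * z + m) + n * (1 - 1)] (mod p)"
      by (intro cong_add cong_mult cong_diff cong_refl) fact
    then have right: "Legendre ((i * z + - (i * n)) * b' + n) p = Legendre (i * (b' * z + m)) p"
      by (intro Legendre_cong) (simp add: m_def algebra_simps)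
    show "?F (i * z + - (i * n)) = Legendre i p * Legendre (z * (b' * z + m)) p"
      unfolding left right by (simp add: Legendre_mult)
  qed
  also have "\<dots> = - (Legendre i p * Legendre b' p)"
    by (simp add: sum_distrib_left[symmetric] Legendre_sum_mult_affine[OF \<open>\<not> p dvd m\<close>])
  finally show ?thesis by (simp add: i_def)
qed

lemma Legendre_correlation_abs_le_1:
  assumes "\<not> p dvd b - b'" and "\<not> p dvd n"
  shows "\<bar>\<Sum>a\<in>{0..<p}. Legendre (a * b + n) p * Legendre (a * b' + n) p\<bar> \<le> 1"
proof -
  have bound: "\<bar>Legendre c p * Legendre c' p\<bar> \<le> 1" for c c'
    using Legendre_cases[of c p] Legendre_cases[of c' p] by auto
  show ?thesis
  proof (cases "p dvd b")
    case False
    with Legendre_correlation_eq[OF False assms] bound show ?thesis by simp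
  next
    case True
    with assms(1) have "\<not> p dvd b'" "\<not> p dvd b' - b"
      by (auto simp: dvd_diff dvd_diff_commute)
    from Legendre_correlation_eq[OF this assms(2)] bound show ?thesis
      by (simp add: mult.commute)
  qed
qed

lemma card_roots_affine_le_1:
  assumes "A \<subseteq> {0..<p}" and "\<not> p dvd n"
  shows "card {b \<in> A. p dvd a * b + n} \<le> 1"
proof -
  have "finite {b \<in> A. p dvd a * b + n}"
    using assms(1) finite_subset by fastforce
  moreover have "b = b'" if b: "b \<in> A" "p dvd a * b + n" and b': "b' \<in> A" "p dvd a * b' + n"
    for b b'
  proof -
    have "\<not> p dvd a"
      using b(2) assms(2) by (metis dvd_add_right_iff dvd_mult2)
    have "[a * b + n = a * b' + n] (mod p)"
      using b b' by (simp add: cong_def dvd_eq_mod_eq_0)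
    then have "[b = b'] (mod p)"
      using \<open>\<not> p dvd a\<close> by (simp add: cong_add_rcancel cong_mult_lcancel coprime_if_not_dvd)
    moreover have "b \<in> {0..<p}" "b' \<in> {0..<p}" using b b' assms(1) by auto
    ultimately show "b = b'" by (simp add: cong_def)
  qed
  ultimately show ?thesis
    unfolding One_nat_def by (subst card_le_Suc0_iff_eq) blast+
qed

lemma Legendre_row_sum_ge:
  assumes A: "A \<subseteq> {0..<p}" and n: "\<not> p dvd n" and a: "a \<in> A"
    and QR: "\<And>b. b \<in> A \<Longrightarrow> b \<noteq> a \<Longrightarrow> QuadRes p (a * b + n)"
  shows "int (card A) - 3 \<le> (\<Sum>b\<in>A. Legendre (a * b + n) p)"
proof -
  have "finite A" using A finite_subset by blast
  have "1 - 2 * of_bool (b = a) - of_bool (p dvd a * b + n) \<le> Legendre (a * b + n) p"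
    if b: "b \<in> A" for b
  proof (cases "b = a")
    case True
    then show ?thesis using Legendre_cases[of "a * b + n" p] by auto
  next
    case False
    with QR b have "QuadRes p (a * b + n)" by blast
    then show ?thesis
      using False Legendre_QuadRes_nonneg Legendre_QuadRes_eq_1 by (cases "p dvd a * b + n") auto
  qed
  then have "(\<Sum>b\<in>A. 1 - 2 * of_bool (b = a) - of_bool (p dvd a * b + n))
      \<le> (\<Sum>b\<in>A. Legendre (a * b + n) p)"
    by (rule sum_mono)
  moreover have "card {b \<in> A. p dvd a * b + n} \<le> 1"
    by (rule card_roots_affine_le_1[OF A n])
  moreover have "{b. b = a \<and> b \<in> A} = {a}" using a by auto
  ultimately show ?thesis
    using \<open>finite A\<close> by (simp add: sum_subtractf Int_def conj_commute)
qed

lemma sum_sq_Legendre_row_sums_le: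
  assumes A: "A \<subseteq> {0..<p}" and n: "\<not> p dvd n"
  shows "(\<Sum>a\<in>{0..<p}. (\<Sum>b\<in>A. Legendre (a * b + n) p)^2) \<le> int (card A) * (p + int (card A) - 1)"
proof -
  have "finite A" using A finite_subset by blast
  define F where "F b b' = (\<Sum>a\<in>{0..<p}. Legendre (a * b + n) p * Legendre (a * b' + n) p)"
    for b b'
  have diagonal: "F b b \<le> p" for b
  proof -
    have "Legendre (a * b + n) p * Legendre (a * b + n) p \<le> 1" for a
      using Legendre_cases[of "a * b + n" p] by auto
    then have "F b b \<le> (\<Sum>a\<in>{0..<p}. 1)"
      unfolding F_def by (intro sum_mono)
    then show ?thesis using p_gt_2 by simp
  qed
  have off_diagonal: "F b b' \<le> 1" if "b \<in> A" "b' \<in> A" "b \<noteq> b'" for b b'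
  proof -
    have "b \<in> {0..<p}" "b' \<in> {0..<p}" using that A by auto
    with \<open>b \<noteq> b'\<close> have "\<not> p dvd b - b'"
      by (simp flip: mod_eq_dvd_iff)
    then show ?thesis
      using Legendre_correlation_abs_le_1[OF _ n] unfolding F_def by fastforce
  qed
  have "(\<Sum>a\<in>{0..<p}. (\<Sum>b\<in>A. Legendre (a * b + n) p)^2)
      = (\<Sum>a\<in>{0..<p}. \<Sum>b\<in>A. \<Sum>b'\<in>A. Legendre (a * b + n) p * Legendre (a * b' + n) p)"
    unfolding power2_eq_square sum_product ..
  also have "\<dots> = (\<Sum>b\<in>A. \<Sum>b'\<in>A. F b b')"
    unfolding F_def by (subst sum.swap) (simp only: sum.swap[of _ A "{0..<p}"])
  also have "\<dots> \<le> (\<Sum>b\<in>A. p + (int (card A) - 1))"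
  proof (rule sum_mono)
    fix b assume b: "b \<in> A"
    have "(\<Sum>b'\<in>A. F b b') = F b b + (\<Sum>b'\<in>A - {b}. F b b')"
      using sum.remove[OF \<open>finite A\<close> b] .
    also have "\<dots> \<le> p + (\<Sum>b'\<in>A - {b}. 1)"
      using diagonal off_diagonal b by (intro add_mono sum_mono) auto
    finally have "(\<Sum>b'\<in>A. F b b') \<le> p + (\<Sum>b'\<in>A - {b}. 1)" .
    moreover have "card A > 0" using \<open>finite A\<close> b card_gt_0_iff by blast
    ultimately show "(\<Sum>b'\<in>A. F b b') \<le> p + (int (card A) - 1)"
      using \<open>finite A\<close> b by (simp add: of_nat_diff)
  qed
  finally show ?thesis by (simp add: add_diff_eq)
qed

lemma card_le_sqrt_if_products_QuadRes:
  assumes A: "A \<subseteq> {0..<p}" and n: "\<not> p dvd n"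
    and QR: "\<And>a b. a \<in> A \<Longrightarrow> b \<in> A \<Longrightarrow> a \<noteq> b \<Longrightarrow> QuadRes p (a * b + n)"
  shows "real (card A) \<le> sqrt p + 5"
proof (cases "card A \<le> 5")
  case True
  moreover have "sqrt p \<ge> 0" using p_gt_2 by simp
  ultimately show ?thesis by linarith
next
  case False
  define k where "k = card A"
  let ?X = "\<lambda>a. \<Sum>b\<in>A. Legendre (a * b + n) p"
  have "int k * (int k - 3)^2 = (\<Sum>a\<in>A. (int k - 3)^2)" by (simp add: k_def)
  also have "\<dots> \<le> (\<Sum>a\<in>A. (?X a)^2)"
    using Legendre_row_sum_ge[OF A n] QR False by (intro sum_mono power_mono) (auto simp: k_def)
  also have "\<dots> \<le> (\<Sum>a\<in>{0..<p}. (?X a)^2)"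
    using A by (intro sum_mono2) auto
  also have "\<dots> \<le> int k * (p + int k - 1)"
    unfolding k_def by (rule sum_sq_Legendre_row_sums_le[OF A n])
  finally have "(int k - 3)^2 \<le> p + int k - 1"
    by (rule mult_left_le_imp_le) (use False in \<open>simp add: k_def\<close>)
  moreover have "(int k - 5)^2 = (int k - 3)^2 - 4 * int k + 16"
    by (simp add: power2_eq_square algebra_simps)
  ultimately have "(int k - 5)^2 \<le> p"
    using False by (simp add: k_def)
  then have "real_of_int ((int k - 5)^2) \<le> real_of_int p"
    by (simp only: of_int_le_iff)
  then have "(real k - 5)^2 \<le> p"
    by simp
  then show ?thesis
    using real_le_rsqrt by (fastforce simp: k_def)
qed

end

section \<open>A Chebyshev bound for the number of primes\<close>

lemma alternating_binomial_reciprocal_sum: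
  fixes x :: real
  assumes "x > 0"
  shows "(\<Sum>k\<le>m. (-1)^k * real (m choose k) / (x + real k)) = fact m / pochhammer x (Suc m)"
  using assms
proof (induction m arbitrary: x)
  case 0
  then show ?case by simp
next
  case (Suc m)
  define f where "f m x = (\<Sum>k\<le>m. (-1)^k * real (m choose k) / (x + real k))" for m x
  have shift: "(\<Sum>k\<le>Suc m. (-1)^k * real (c k) / (x + real k))
      = 1 / x + (\<Sum>k\<le>m. - ((-1)^k * real (c (Suc k)) / ((x + 1) + real k)))"
    if "c 0 = 1" for c :: "nat \<Rightarrow> nat"
    using that by (subst sum.atMost_Suc_shift) (simp add: add_ac)
  have "f (Suc m) x = f m x - f m (x + 1)"
  proof -
    have "f (Suc m) x = 1 / x + (\<Sum>k\<le>m. - ((-1)^k * real (m choose Suc k) / ((x + 1) + real k)))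
        - f m (x + 1)"
      unfolding f_def shift[of "\<lambda>k. Suc m choose k", OF binomial_n_0]
      by (simp add: algebra_simps add_divide_distrib sum.distrib sum_subtractf sum_negf)
    moreover have "f m x = 1 / x + (\<Sum>k\<le>m. - ((-1)^k * real (m choose Suc k) / ((x + 1) + real k)))"
      unfolding f_def shift[of "\<lambda>k. m choose k", OF binomial_n_0, symmetric]
      by (simp add: sum.atMost_Suc)
    ultimately show ?thesis by simp
  qed
  also have "\<dots> = fact m / pochhammer x (Suc m) - fact m / pochhammer (x + 1) (Suc m)"
    using Suc by (simp add: f_def)
  also have "\<dots> = fact (Suc m) / pochhammer x (Suc (Suc m))"
  proof -
    have "pochhammer x (Suc m) * (x + real (Suc m)) = pochhammer x (Suc (Suc m))"
      by (simp add: pochhammer_Suc)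
    moreover have "x * pochhammer (x + 1) (Suc m) = pochhammer x (Suc (Suc m))"
      by (simp add: pochhammer_rec)
    moreover have "x + real (Suc m) \<noteq> 0" "x \<noteq> 0"
      using Suc.prems by simp_all
    ultimately have "fact m / pochhammer x (Suc m) = fact m * (x + real (Suc m)) / pochhammer x (Suc (Suc m))"
      and "fact m / pochhammer (x + 1) (Suc m) = fact m * x / pochhammer x (Suc (Suc m))"
      by (metis mult_divide_mult_cancel_right mult.commute)+
    then show ?thesis
      by (simp add: diff_divide_distrib[symmetric] algebra_simps)
  qed
  finally show ?case by (simp add: f_def)
qed

lemma Lcm_atLeastAtMost_dvd_prod_prime_powers:
  fixes N :: nat
  shows "Lcm {1..N} dvd (\<Prod>p | prime p \<and> p \<le> N. p ^ Max (multiplicity p ` {1..N}))"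
    (is "_ dvd ?D")
proof (rule Lcm_least)
  have "finite {p. prime p \<and> p \<le> N}" by (rule finite_subset[of _ "{..N}"]) auto
  fix i assume i: "i \<in> {1..N}"
  show "i dvd ?D"
  proof (rule multiplicity_le_imp_dvd)
    show "i \<noteq> 0" using i by simp
    fix q :: nat assume q: "prime q"
    show "multiplicity q i \<le> multiplicity q ?D"
    proof (cases "q \<le> N")
      case True
      have "multiplicity q ?D = Max (multiplicity q ` {1..N})"
        using multiplicity_prod_prime_powers[OF \<open>finite _\<close> _ q] q True by simp
      moreover have "multiplicity q i \<le> Max (multiplicity q ` {1..N})"
        using i by (intro Max_ge) auto
      ultimately show ?thesis by simp
    next
      case False
      with i have "\<not> q dvd i" by (auto dest: dvd_imp_le)
      then show ?thesis by (simp add: not_dvd_imp_multiplicity_0)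
    qed
  qed
qed

lemma Lcm_atLeastAtMost_le_pow_prime_count:
  fixes N :: nat
  shows "Lcm {1..N} \<le> N ^ card {p. prime p \<and> p \<le> N}"
proof -
  let ?e = "\<lambda>p. Max (multiplicity p ` {1..N})"
  have "Lcm {1..N} \<le> (\<Prod>p | prime p \<and> p \<le> N. p ^ ?e p)"
    by (intro dvd_imp_le Lcm_atLeastAtMost_dvd_prod_prime_powers prod_pos) (auto intro: prime_gt_0_nat)
  also have "\<dots> \<le> (\<Prod>p | prime p \<and> p \<le> N. N)"
  proof (rule prod_mono)
    fix p assume p: "p \<in> {p. prime p \<and> p \<le> N}"
    then have "{1..N} \<noteq> {}" using prime_ge_2_nat[of p] by simp
    then have "?e p \<in> multiplicity p ` {1..N}" by (intro Max_in) auto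
    then obtain i where i: "i \<in> {1..N}" "?e p = multiplicity p i" by blast
    have "p ^ ?e p \<le> i"
      unfolding i(2) using i(1) by (intro dvd_imp_le multiplicity_dvd) auto
    with i(1) show "0 \<le> p ^ ?e p \<and> p ^ ?e p \<le> N" by simp
  qed
  finally show ?thesis by simp
qed

lemma four_pow_le_central_binomial: "4 ^ m \<le> (2 * m + 1) * ((2 * m) choose m)"
proof -
  have "4 ^ m = (\<Sum>k\<le>2 * m. (2 * m) choose k)"
    by (simp add: choose_row_sum power_mult)
  also have "\<dots> \<le> (\<Sum>k\<le>2 * m. (2 * m) choose m)"
    by (intro sum_mono binomial_maximum')
  finally show ?thesis by simp
qed

lemma pochhammer_div_fact_eq_central_binomial:
  "pochhammer (real (m + 1)) (Suc m) / fact m = real ((2 * m + 1) * ((2 * m) choose m))"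
proof -
  have "(fact (m + Suc m) :: real) = fact m * pochhammer (real (m + 1)) (Suc m)"
    unfolding pochhammer_fact pochhammer_product' by (simp add: pochhammer_fact add_ac)
  moreover have "m + Suc m = 2 * m + 1" by simp
  ultimately have fact_eq: "(fact (2 * m + 1) :: real) = fact m * pochhammer (real (m + 1)) (Suc m)"
    by metis
  have "pochhammer (real (m + 1)) (Suc m) / fact m = fact (2 * m + 1) / (fact m * fact m)"
    unfolding fact_eq by simp
  also have "\<dots> = real (2 * m + 1) * (fact (2 * m) / (fact m * fact (2 * m - m)))"
    by (simp add: field_simps)
  finally show ?thesis by (simp add: binomial_fact field_simps)
qed

lemma four_pow_le_Lcm: "4 ^ m \<le> Lcm {1..2 * m + 1 :: nat}"
proof -
  define L where "L = Lcm {1..2 * m + 1 :: nat}"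
  define x where "x = real (m + 1)"
  have "L \<noteq> 0"
    unfolding L_def by (subst Lcm_0_iff) auto
  have poch_pos: "pochhammer x (Suc m) > 0"
    unfolding x_def by (simp add: pochhammer_pos)
  have dvd_L: "(m + 1 + k) dvd L" if "k \<le> m" for k
    unfolding L_def using that by (intro dvd_Lcm) auto
  \<comment> \<open>\<open>I = L \<integral>\<^sub>0\<^sup>1 t\<^sup>m (1 - t)\<^sup>m dt\<close> is a positive integer, hence at least 1.\<close>
  define I where "I = (\<Sum>k\<le>m. (-1)^k * int (m choose k) * int (L div (m + 1 + k)))"
  have "real_of_int I = real L * (\<Sum>k\<le>m. (-1)^k * real (m choose k) / (x + real k))"
    using dvd_L by (simp add: I_def sum_distrib_left x_def real_of_nat_div add_ac mult_ac)
  also have "\<dots> = real L * (fact m / pochhammer x (Suc m))"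
    by (simp add: alternating_binomial_reciprocal_sum x_def)
  finally have I_eq: "real_of_int I = real L * (fact m / pochhammer x (Suc m))" .
  moreover have "real L * (fact m / pochhammer x (Suc m)) > 0"
    using \<open>L \<noteq> 0\<close> poch_pos by simp
  ultimately have "I \<ge> 1" by linarith
  with I_eq have "real L * (fact m / pochhammer x (Suc m)) \<ge> 1" by linarith
  then have "pochhammer x (Suc m) / fact m \<le> real L"
    using poch_pos by (simp add: field_simps)
  then have "(2 * m + 1) * ((2 * m) choose m) \<le> L"
    unfolding x_def pochhammer_div_fact_eq_central_binomial by (simp only: of_nat_le_iff)
  with four_pow_le_central_binomial show ?thesis
    unfolding L_def by (rule order_trans)
qed

lemma card_int_primes_eq: "card {p :: int. prime p \<and> p \<le> int N} = card {p. prime p \<and> p \<le> N}"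
proof -
  have "{p :: int. prime p \<and> p \<le> int N} = int ` {p. prime p \<and> p \<le> N}"
  proof (intro equalityI subsetI)
    fix p :: int assume "p \<in> {p. prime p \<and> p \<le> int N}"
    then have "p = int (nat p)" "nat p \<in> {p. prime p \<and> p \<le> N}"
      using prime_ge_0_int by auto
    then show "p \<in> int ` {p. prime p \<and> p \<le> N}" by blast
  qed auto
  then show ?thesis by (simp add: card_image)
qed

lemma ln_4_mult_le_prime_count:
  "real m * ln 4 \<le> real (card {p :: int. prime p \<and> p \<le> int (2 * m + 1)}) * ln (real (2 * m + 1))"
proof -
  have "(4::real) ^ m \<le> real (Lcm {1..2 * m + 1})"
    using four_pow_le_Lcm[of m] by (metis of_nat_le_iff of_nat_numeral of_nat_power)
  also have "\<dots> \<le> real (2 * m + 1) ^ card {p. prime p \<and> p \<le> 2 * m + 1}"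
    using Lcm_atLeastAtMost_le_pow_prime_count[of "2 * m + 1"] by (metis of_nat_le_iff of_nat_power)
  finally have "ln ((4::real) ^ m) \<le> ln (real (2 * m + 1) ^ card {p. prime p \<and> p \<le> 2 * m + 1})"
    by (subst ln_le_cancel_iff) auto
  then show ?thesis
    unfolding card_int_primes_eq by (simp add: ln_realpow)
qed

section \<open>The larger sieve\<close>

lemma card_sq_le_card_image_mult_collisions:
  assumes "finite A"
  shows "real (card A)^2 \<le> real (card (f ` A)) * (\<Sum>x\<in>A. \<Sum>y\<in>A. of_bool (f x = f y))"
proof -
  define Z where "Z r = real (card {x \<in> A. f x = r})" for r
  have regroup: "(\<Sum>x\<in>A. h (f x)) = (\<Sum>r\<in>f ` A. Z r * h r)" for h :: "_ \<Rightarrow> real"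
    unfolding Z_def using sum.image_gen[OF assms, of "\<lambda>x. h (f x)" f] by simp
  have "(\<Sum>y\<in>A. of_bool (f x = f y)) = Z (f x)" for x
    using assms by (simp add: Z_def Int_def eq_commute)
  then have "(\<Sum>x\<in>A. \<Sum>y\<in>A. of_bool (f x = f y)) = (\<Sum>r\<in>f ` A. (Z r)^2)"
    using regroup[of Z] by (simp add: power2_eq_square)
  moreover have "real (card A) = (\<Sum>r\<in>f ` A. Z r)"
    using regroup[of "\<lambda>_. 1"] by simp
  ultimately show ?thesis
    using sum_squared_le_sum_of_squares[of Z "f ` A"] by (simp add: mult.commute)
qed

lemma card_moduli_mult_card_sq_le:
  fixes A P :: "int set" and V :: real
  assumes "finite A" "V \<ge> 0" "\<And>p. p \<in> P \<Longrightarrow> real (card ((\<lambda>x. x mod p) ` A)) \<le> V"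
  shows "real (card P) * real (card A)^2 \<le> V * (\<Sum>x\<in>A. \<Sum>y\<in>A. real (card {p \<in> P. p dvd x - y}))"
proof (cases "finite P")
  case True
  have "real (card P) * real (card A)^2 = (\<Sum>p\<in>P. real (card A)^2)" by simp
  also have "\<dots> \<le> (\<Sum>p\<in>P. V * (\<Sum>x\<in>A. \<Sum>y\<in>A. of_bool (x mod p = y mod p)))"
  proof (rule sum_mono)
    fix p assume "p \<in> P"
    have "real (card A)^2
        \<le> real (card ((\<lambda>x. x mod p) ` A)) * (\<Sum>x\<in>A. \<Sum>y\<in>A. of_bool (x mod p = y mod p))"
      by (rule card_sq_le_card_image_mult_collisions[OF \<open>finite A\<close>])
    also have "\<dots> \<le> V * (\<Sum>x\<in>A. \<Sum>y\<in>A. of_bool (x mod p = y mod p))"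
      using assms(3)[OF \<open>p \<in> P\<close>] by (intro mult_right_mono sum_nonneg) auto
    finally show "real (card A)^2 \<le> V * (\<Sum>x\<in>A. \<Sum>y\<in>A. of_bool (x mod p = y mod p))" .
  qed
  also have "\<dots> = V * (\<Sum>x\<in>A. \<Sum>y\<in>A. \<Sum>p\<in>P. of_bool (x mod p = y mod p))"
    by (simp add: sum_distrib_left[symmetric] sum.swap[of _ P A])
  also have "\<dots> = V * (\<Sum>x\<in>A. \<Sum>y\<in>A. real (card {p \<in> P. p dvd x - y}))"
    using True by (simp add: mod_eq_dvd_iff Int_def)
  finally show ?thesis .
next
  case False
  then show ?thesis using assms(2) by (simp add: sum_nonneg)
qed

lemma larger_sieve:
  fixes A P :: "int set" and V B :: real
  assumes "finite A" "finite P" "P \<noteq> {}"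
    and residues: "\<And>p. p \<in> P \<Longrightarrow> real (card ((\<lambda>x. x mod p) ` A)) \<le> V"
    and divisors: "\<And>x y. x \<in> A \<Longrightarrow> y \<in> A \<Longrightarrow> x \<noteq> y \<Longrightarrow>
      real (card {p \<in> P. p dvd x - y}) \<le> B"
    and many_moduli: "2 * V * B \<le> real (card P)" and "V \<ge> 0" "B \<ge> 0"
  shows "real (card A) \<le> 2 * V"
proof (cases "A = {}")
  case True
  then show ?thesis using \<open>V \<ge> 0\<close> by simp
next
  case False
  define k where "k = real (card A)"
  define c where "c = real (card P)"
  have "k > 0" "c > 0"
    using False assms(1-3) by (simp_all add: k_def c_def card_gt_0_iff)
  have row: "(\<Sum>y\<in>A. real (card {p \<in> P. p dvd x - y})) \<le> c + (k - 1) * B" if x: "x \<in> A" for x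
  proof -
    have "(\<Sum>y\<in>A. real (card {p \<in> P. p dvd x - y}))
        = c + (\<Sum>y\<in>A - {x}. real (card {p \<in> P. p dvd x - y}))"
      using sum.remove[OF \<open>finite A\<close> x, of "\<lambda>y. real (card {p \<in> P. p dvd x - y})"]
      by (simp add: c_def)
    also have "\<dots> \<le> c + (\<Sum>y\<in>A - {x}. B)"
      using divisors x by (intro add_left_mono sum_mono) auto
    also have "(\<Sum>y\<in>A - {x}. B) = (k - 1) * B"
      using x \<open>finite A\<close> \<open>k > 0\<close> by (simp add: k_def of_nat_diff)
    finally show ?thesis .
  qed
  have "c * k^2 \<le> V * (\<Sum>x\<in>A. \<Sum>y\<in>A. real (card {p \<in> P. p dvd x - y}))"
    unfolding c_def k_def by (rule card_moduli_mult_card_sq_le[OF \<open>finite A\<close> \<open>V \<ge> 0\<close> residues])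
  also have "\<dots> \<le> V * (\<Sum>x\<in>A. c + (k - 1) * B)"
    using row \<open>V \<ge> 0\<close> by (intro mult_left_mono sum_mono) auto
  also have "\<dots> = V * (k * (c + (k - 1) * B))"
    by (simp add: k_def)
  finally have "c * k \<le> V * (c + (k - 1) * B)"
    using \<open>k > 0\<close> by (simp add: power2_eq_square mult.assoc mult.left_commute[of V])
  also have "\<dots> \<le> V * c + k * (V * B)"
    using \<open>V \<ge> 0\<close> \<open>B \<ge> 0\<close> by (simp add: algebra_simps mult_nonneg_nonneg)
  also have "\<dots> \<le> V * c + k * (c / 2)"
    using many_moduli \<open>k > 0\<close> by (intro add_left_mono mult_left_mono) (auto simp: c_def)
  finally have "c * k \<le> c * (2 * V)" by (simp add: algebra_simps)
  with \<open>c > 0\<close> show ?thesis by (simp add: k_def)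
qed

lemma prod_primes_dvd:
  fixes Q :: "'a :: factorial_semiring_gcd set"
  assumes "finite Q" "\<And>q. q \<in> Q \<Longrightarrow> prime q \<and> q dvd d"
  shows "\<Prod>Q dvd d"
  using assms
proof (induction Q rule: finite_induct)
  case (insert q Q)
  have "coprime q (\<Prod>Q)"
  proof (rule prod_coprime_right)
    fix q' assume "q' \<in> Q"
    with insert show "coprime q q'" by (metis insert_iff primes_coprime)
  qed
  with insert show ?case by (simp add: divides_mult)
qed simp

lemma card_prime_divisors_above_le:
  fixes P :: "int set" and d :: int and R :: real
  assumes "finite P" "\<And>p. p \<in> P \<Longrightarrow> prime p \<and> R < p" "R > 0" "d \<noteq> 0"
  shows "real (card {p \<in> P. p dvd d}) * ln R \<le> ln \<bar>d\<bar>"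
proof -
  define Q where "Q = {p \<in> P. p dvd d}"
  have "finite Q" using \<open>finite P\<close> by (simp add: Q_def)
  have "R ^ card Q = (\<Prod>q\<in>Q. R)" by simp
  also have "\<dots> \<le> (\<Prod>q\<in>Q. real_of_int q)"
    using assms(2,3) by (intro prod_mono) (auto simp: Q_def less_imp_le)
  also have "\<dots> \<le> \<bar>d\<bar>"
  proof -
    have "\<Prod>Q dvd d" using assms(2) by (intro prod_primes_dvd \<open>finite Q\<close>) (auto simp: Q_def)
    moreover have "\<Prod>Q > 0" using assms(2) by (intro prod_pos) (auto simp: Q_def prime_gt_0_int)
    ultimately have "\<Prod>Q \<le> \<bar>d\<bar>" using dvd_imp_le_int[OF \<open>d \<noteq> 0\<close>] by fastforce
    then have "real_of_int (\<Prod>Q) \<le> real_of_int \<bar>d\<bar>" by linarith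
    then show ?thesis by simp
  qed
  finally have "ln (R ^ card Q) \<le> ln \<bar>d\<bar>"
    using \<open>R > 0\<close> \<open>d \<noteq> 0\<close> by (subst ln_le_cancel_iff) auto
  then show ?thesis using \<open>R > 0\<close> by (simp add: Q_def ln_realpow)
qed

lemma card_primes_above_not_dvd_ge:
  fixes N n :: int and R :: real
  assumes "R > 1" "n \<noteq> 0"
  shows "real (card {p :: int. prime p \<and> p \<le> N}) - R - ln \<bar>n\<bar> / ln R
    \<le> real (card {p. prime p \<and> R < p \<and> p \<le> N \<and> \<not> p dvd n})"
proof -
  define Pr where "Pr = {p :: int. prime p \<and> p \<le> N}"
  define Small where "Small = {p \<in> Pr. p \<le> R}"
  define Dv where "Dv = {p \<in> {p \<in> Pr. R < p}. p dvd n}"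
  have "finite Pr" unfolding Pr_def by (rule finite_subset[of _ "{0..N}"]) (auto dest: prime_ge_0_int)
  have "Pr = {p. prime p \<and> R < p \<and> p \<le> N \<and> \<not> p dvd n} \<union> Small \<union> Dv"
    by (auto simp: Pr_def Small_def Dv_def)
  then have "card Pr = card ({p. prime p \<and> R < p \<and> p \<le> N \<and> \<not> p dvd n} \<union> Small \<union> Dv)"
    by simp
  then have "card Pr \<le> card {p. prime p \<and> R < p \<and> p \<le> N \<and> \<not> p dvd n} + card Small + card Dv"
    using card_Un_le[of "{p. prime p \<and> R < p \<and> p \<le> N \<and> \<not> p dvd n} \<union> Small" Dv]
      card_Un_le[of "{p. prime p \<and> R < p \<and> p \<le> N \<and> \<not> p dvd n}" Small]
    by linarith
  moreover have "real (card Small) \<le> R"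
  proof -
    have "Small \<subseteq> {1..\<lfloor>R\<rfloor>}"
    proof
      fix p assume "p \<in> Small"
      then have "prime p" "p \<le> R" by (auto simp: Small_def Pr_def)
      then show "p \<in> {1..\<lfloor>R\<rfloor>}" using prime_ge_2_int[of p] by (simp add: le_floor_iff)
    qed
    then have "card Small \<le> nat \<lfloor>R\<rfloor>"
      using card_mono[of "{1..\<lfloor>R\<rfloor>}" Small] by simp
    then show ?thesis using \<open>R > 1\<close> by linarith
  qed
  moreover have "finite {p \<in> Pr. R < p}" using \<open>finite Pr\<close> by simp
  then have "real (card Dv) * ln R \<le> ln \<bar>n\<bar>"
    unfolding Dv_def using assms by (intro card_prime_divisors_above_le) (auto simp: Pr_def)
  then have "real (card Dv) \<le> ln \<bar>n\<bar> / ln R"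
    using \<open>R > 1\<close> by (simp add: pos_le_divide_eq)
  ultimately show ?thesis unfolding Pr_def by linarith
qed

section \<open>Sets with property D(n)\<close>

lemma one_le_ln_4: "1 \<le> ln (4 :: real)"
  using exp_le by (subst ln_ge_iff) auto

lemma ln_le_div_16_add_3:
  fixes x :: real
  assumes "x > 0"
  shows "ln x \<le> x / 16 + 3"
proof -
  have "ln (x / 16) \<le> x / 16 - 1" using assms by (intro ln_le_minus_one) simp
  moreover have "ln (16 :: real) < 4"
    using ln_2_less_1 ln_realpow[of 2 4] by simp
  ultimately show ?thesis using assms by (simp add: ln_div)
qed

lemma sieve_level_numerics:
  fixes R l N :: real
  assumes "160 \<le> R" "0 \<le> l" "40 * l \<le> R" "(R^2 - 1) * ln 4 \<le> 4 * N * ln R"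
  shows "2 * (R + 5) * (2 * l / ln R) \<le> N - R - l / ln R"
proof -
  define L where "L = ln R"
  have "L > 0" using assms(1) by (simp add: L_def)
  have "R * R \<le> 4 * (N * L) + 1"
  proof -
    have "1 \<le> R^2" using assms(1) by (simp add: one_le_power)
    then have "(R^2 - 1) * 1 \<le> (R^2 - 1) * ln 4"
      using one_le_ln_4 by (intro mult_left_mono) auto
    with assms(4) show ?thesis by (simp add: L_def power2_eq_square)
  qed
  moreover have "R * L \<le> R * R / 16 + 3 * R"
    using mult_left_mono[OF ln_le_div_16_add_3[of R], of R] assms(1)
    by (simp add: L_def algebra_simps)
  moreover have "l * R \<le> R * R / 40"
    using mult_right_mono[OF assms(3), of R] assms(1) by simp
  moreover have "160 * R \<le> R * R"
    using assms(1) by (intro mult_right_mono) auto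
  ultimately have "4 * (l * R) + 20 * l \<le> N * L - R * L - l"
    using assms(1,3) by linarith
  then have "4 * l * (R + 5) \<le> N * L - R * L - l"
    by (simp add: algebra_simps)
  then have "4 * l * (R + 5) / L \<le> (N * L - R * L - l) / L"
    using \<open>L > 0\<close> by (intro divide_right_mono) auto
  then show ?thesis
    using \<open>L > 0\<close> by (simp add: L_def field_simps)
qed

lemma exists_odd_sqrt_between:
  fixes t :: real
  assumes "1 \<le> t"
  obtains m :: nat where "t \<le> sqrt (2 * m + 1)" "sqrt (2 * m + 1) \<le> t + 1"
proof
  define m where "m = nat \<lceil>t^2 / 2\<rceil>"
  have "real m = of_int \<lceil>t^2 / 2\<rceil>"
    unfolding m_def by (simp add: of_nat_nat)
  then have "t^2 / 2 \<le> real m" "real m \<le> t^2 / 2 + 1"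
    using le_of_int_ceiling[of "t^2 / 2"] of_int_ceiling_le_add_one[of "t^2 / 2"] by linarith+
  then have "t^2 \<le> 2 * m + 1" "2 * m + 1 \<le> (t + 1)^2"
    using assms by (auto simp: power2_eq_square algebra_simps)
  then show "t \<le> sqrt (2 * m + 1)" "sqrt (2 * m + 1) \<le> t + 1"
    using assms real_le_rsqrt real_sqrt_le_iff[of _ "(t + 1)^2"] by auto
qed

lemma four_le_ln:
  assumes "400 \<le> x"
  shows "4 \<le> ln (x :: real)"
proof -
  have "exp 4 = exp (1 :: real) ^ 4"
    using exp_of_nat_mult[of 4 1] by simp
  also have "\<dots> \<le> 3 ^ 4"
    using exp_le by (intro power_mono) auto
  finally show ?thesis
    using assms by (subst ln_ge_iff) auto
qed

lemma card_residues_D_set_le: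
  assumes "has_property_D n S" "prime p" "p > 2" "\<not> p dvd n"
  shows "real (card ((\<lambda>x. x mod p) ` S)) \<le> sqrt p + 5"
proof (rule card_le_sqrt_if_products_QuadRes[OF assms(2,3) _ assms(4)])
  show "(\<lambda>x. x mod p) ` S \<subseteq> {0..<p}" using assms(3) by auto
  fix a b assume "a \<in> (\<lambda>x. x mod p) ` S" "b \<in> (\<lambda>x. x mod p) ` S" "a \<noteq> b"
  then obtain x y where "x \<in> S" "y \<in> S" "x \<noteq> y" and ab: "a = x mod p" "b = y mod p"
    by blast
  then obtain t where "x * y + n = t^2"
    using assms(1) unfolding has_property_D_def by blast
  moreover have "[a * b + n = x * y + n] (mod p)"
    unfolding ab cong_def by (metis mod_add_left_eq mod_mult_eq)
  ultimately show "QuadRes p (a * b + n)"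
    unfolding QuadRes_def by (metis cong_sym)
qed

lemma card_sieving_primes_ge:
  fixes n :: int and m :: nat and R :: real
  assumes R: "R = sqrt (2 * m + 1)" and "4 \<le> ln \<bar>n\<bar>" "40 * ln \<bar>n\<bar> \<le> R"
  shows "2 * (R + 5) * (2 * ln \<bar>n\<bar> / ln R)
    \<le> real (card {p :: int. prime p \<and> R < p \<and> p \<le> int (2 * m + 1) \<and> \<not> p dvd n})"
proof -
  let ?\<pi> = "real (card {p :: int. prime p \<and> p \<le> int (2 * m + 1)})"
  have "R \<ge> 160" "n \<noteq> 0" using assms(2,3) by auto
  have "R^2 = 2 * m + 1" by (simp add: R)
  then have "ln (2 * m + 1) = 2 * ln R"
    using \<open>R \<ge> 160\<close> ln_realpow[of R 2] by simp
  with ln_4_mult_le_prime_count[of m] \<open>R^2 = 2 * m + 1\<close>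
  have "(R^2 - 1) * ln 4 \<le> 4 * ?\<pi> * ln R"
    by (simp add: algebra_simps)
  then have "2 * (R + 5) * (2 * ln \<bar>n\<bar> / ln R) \<le> ?\<pi> - R - ln \<bar>n\<bar> / ln R"
    using assms(2,3) \<open>R \<ge> 160\<close> by (intro sieve_level_numerics) auto
  also have "\<dots> \<le> real (card {p :: int. prime p \<and> R < p \<and> p \<le> int (2 * m + 1) \<and> \<not> p dvd n})"
    using \<open>R \<ge> 160\<close> \<open>n \<noteq> 0\<close> by (intro card_primes_above_not_dvd_ge) auto
  finally show ?thesis .
qed

lemma card_D_set_le:
  fixes n :: int
  assumes "\<bar>n\<bar> \<ge> 400" and D: "has_property_D n S"
  shows "real (card (S \<inter> {1..n\<^sup>2})) \<le> 80 * ln \<bar>n\<bar> + 12"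
proof -
  define l where "l = ln \<bar>n\<bar>"
  have "l \<ge> 4" unfolding l_def using assms(1) four_le_ln by simp
  obtain m :: nat where R_bounds: "40 * l \<le> sqrt (2 * m + 1)" "sqrt (2 * m + 1) \<le> 40 * l + 1"
    using exists_odd_sqrt_between[of "40 * l"] \<open>l \<ge> 4\<close> by auto
  define R where "R = sqrt (2 * m + 1)"
  have "R \<ge> 160" using R_bounds \<open>l \<ge> 4\<close> by (simp add: R_def)
  define A where "A = S \<inter> {1..n\<^sup>2}"
  define P where "P = {p :: int. prime p \<and> R < p \<and> p \<le> int (2 * m + 1) \<and> \<not> p dvd n}"
  define B where "B = 2 * l / ln R"
  have "finite P"
    unfolding P_def by (rule finite_subset[of _ "{0..int (2 * m + 1)}"]) (auto dest: prime_ge_0_int)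
  have many_primes: "2 * (R + 5) * B \<le> real (card P)"
    unfolding B_def P_def l_def using R_bounds \<open>l \<ge> 4\<close>
    by (intro card_sieving_primes_ge) (simp_all add: R_def l_def)
  have "B > 0" using \<open>l \<ge> 4\<close> \<open>R \<ge> 160\<close> by (simp add: B_def)
  then have "2 * (R + 5) * B > 0" using \<open>R \<ge> 160\<close> by simp
  with many_primes have "P \<noteq> {}" by auto
  have residues: "real (card ((\<lambda>x. x mod p) ` A)) \<le> R + 5" if "p \<in> P" for p
  proof -
    have "has_property_D n A" using D by (auto simp: has_property_D_def A_def)
    moreover have "prime p" "p > 2" "\<not> p dvd n" "p \<le> 2 * m + 1"
      using that \<open>R \<ge> 160\<close> by (auto simp: P_def)
    ultimately have "real (card ((\<lambda>x. x mod p) ` A)) \<le> sqrt p + 5"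
      by (intro card_residues_D_set_le)
    moreover have "sqrt p \<le> R" unfolding R_def using \<open>p \<le> 2 * m + 1\<close> by simp
    ultimately show ?thesis by simp
  qed
  have divisors: "real (card {p \<in> P. p dvd x - y}) \<le> B" if "x \<in> A" "y \<in> A" "x \<noteq> y" for x y
  proof -
    have "real (card {p \<in> P. p dvd x - y}) * ln R \<le> ln \<bar>x - y\<bar>"
      using \<open>finite P\<close> \<open>R \<ge> 160\<close> that by (intro card_prime_divisors_above_le) (auto simp: P_def)
    also have "\<dots> \<le> ln (\<bar>n\<bar>^2)"
    proof -
      have "\<bar>x - y\<bar> \<le> n^2" using that by (auto simp: A_def)
      then have "real_of_int \<bar>x - y\<bar> \<le> real_of_int (n^2)" by (simp only: of_int_le_iff)
      then show ?thesis using that by (subst ln_le_cancel_iff) auto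
    qed
    also have "\<dots> = 2 * l"
      using ln_realpow[of "\<bar>real_of_int n\<bar>" 2] by (simp add: l_def)
    finally show ?thesis
      using \<open>R \<ge> 160\<close> by (simp add: B_def pos_le_divide_eq)
  qed
  have "real (card A) \<le> 2 * (R + 5)"
    using larger_sieve[OF _ \<open>finite P\<close> \<open>P \<noteq> {}\<close> residues divisors]
      many_primes \<open>B > 0\<close> \<open>R \<ge> 160\<close>
    by (simp add: A_def)
  with R_bounds show ?thesis by (simp add: A_def R_def l_def)
qed

lemma C_le:
  assumes "\<And>S. has_property_D n S \<Longrightarrow> real (card (S \<inter> {1..n\<^sup>2})) \<le> b"
  shows "real (C n) \<le> b"
proof -
  define X where "X = {card (S \<inter> {1..n\<^sup>2}) | S. has_property_D n S}"
  have "has_property_D n {}" by (simp add: has_property_D_def)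
  then have "X \<noteq> {}" by (auto simp: X_def)
  have bound: "real x \<le> b" if "x \<in> X" for x
    using that assms by (auto simp: X_def)
  then have "X \<subseteq> {..nat \<lfloor>b\<rfloor>}" by (auto intro: le_nat_floor)
  then have "Sup X \<in> X"
    using \<open>X \<noteq> {}\<close> by (simp add: Sup_nat_def finite_subset)
  then show ?thesis by (simp add: C_def X_def[symmetric] bound)
qed

theorem theorem3:
  fixes n :: int
  assumes "\<bar>n\<bar> \<ge> 400"
  shows "real (C n) < 265.55 * ln \<bar>n\<bar> * (ln (ln \<bar>n\<bar>))\<^sup>2 + 9.01 * ln (ln \<bar>n\<bar>)"
proof -
  define l where "l = ln \<bar>n\<bar>"
  have decimal_eqs: "(265.55 :: real) = 5311 / 20" "(9.01 :: real) = 901 / 100" by simp_all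
  have "4 \<le> l" unfolding l_def using assms four_le_ln by simp
  then have "1 \<le> ln l" using exp_le by (subst ln_ge_iff) auto
  then have "1 \<le> (ln l)\<^sup>2" by (simp add: one_le_power)
  then have "265.55 * l \<le> 265.55 * l * (ln l)\<^sup>2"
    using \<open>4 \<le> l\<close> by (simp add: mult_le_cancel_left1)
  have "real (C n) \<le> 80 * l + 12"
    unfolding l_def using assms by (intro C_le card_D_set_le)
  also have "\<dots> < 265.55 * l * (ln l)\<^sup>2 + 9.01 * ln l"
    using \<open>265.55 * l \<le> 265.55 * l * (ln l)\<^sup>2\<close> \<open>1 \<le> ln l\<close> \<open>4 \<le> l\<close>
    unfolding decimal_eqs by linarith
  finally show ?thesis by (simp add: l_def)
qed

end
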